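(* Let $\Omega\subseteq\mathbb{R}^3$ be open and $R\in C^2(\Omega;SO(3))$ with $\operatorname{curl}R=\alpha$ for some constant matrix $\alpha\in\mathbb{R}^{3\times3}$. Then: (i) $\operatorname{div}R_i=\varepsilon_{ijk}\,\alpha_j\cdot R_k$ for $i\in\{1,2,3\}$; (ii) $\Delta R_i=\varepsilon_{ijk}\nabla(\alpha_j\cdot R_k)$ for $i\in\{1,2,3\}$; (iii) $|\nabla R|^2=-\mathrm{tr}(R^T\alpha R^T\alpha)$; (iv) $\mathrm{tr}(R^T\alpha R^T\alpha)=|(R^T\alpha)_{sym}|^2-|(R^T\alpha)_{skew}|^2$; (v) if $R(x_0)=Id$ for some $x_0\in\Omega$, then $|\operatorname{div}(R)(x_0)|^2=2|\alpha_{skew}|^2$; (vi) $\sum_{i=1}^3|(\nabla R_i)_{sym}|^2\ge\frac13|\operatorname{div}(R)|^2$; (vii) $\sum_{i=1}^3|(\nabla R_i)_{skew}|^2=\frac12|\alpha|^2$. All identities hold pointwise in $\Omega$.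
   Context: Einstein summation convention is used; $\varepsilon_{ijk}$ is the sign of the permutation $(ijk)$. For a matrix $A$, $A_i$ denotes its $i$-th row. $\operatorname{curl}$ of a matrix field is taken row-wise: $(\operatorname{curl}R)_{ij}=\varepsilon_{jkl}\partial_kR_{il}$, so $\alpha_j$ is the $j$-th row of $\alpha$. $\operatorname{div}R_i=\sum_l\partial_lR_{il}$ and $\operatorname{div}(R)$ is the vector $(\operatorname{div}R_1,\operatorname{div}R_2,\operatorname{div}R_3)$. $\nabla R_i$ is the $3\times3$ gradient matrix of the row $R_i$, and $|\nabla R|^2=\sum_{k,l,m}(\partial_mR_{kl})^2$. $A_{sym}=\frac12(A+A^T)$, $A_{skew}=\frac12(A-A^T)$, $|A|^2=A:A=\mathrm{tr}(A^TA)$. *)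

theory Defs
  imports "HOL-Analysis.Analysis"
begin

type_synonym mat3 = "real^3^3"

definition eps :: "3 \<Rightarrow> 3 \<Rightarrow> 3 \<Rightarrow> real" where
  "eps i j k = (if i = j \<or> j = k \<or> i = k then 0
     else if (i, j, k) \<in> {(1,2,3), (2,3,1), (3,1,2)} then 1 else -1)"

definition pd :: "3 \<Rightarrow> (real^3 \<Rightarrow> 'b::real_normed_vector) \<Rightarrow> real^3 \<Rightarrow> 'b" where
  "pd k f = (\<lambda>x. frechet_derivative f (at x) (axis k 1))"

definition C2_on :: "(real^3) set \<Rightarrow> (real^3 \<Rightarrow> 'b::real_normed_vector) \<Rightarrow> bool" where
  "C2_on \<Omega> f \<longleftrightarrow> f differentiable_on \<Omega> \<and>
     (\<forall>k. pd k f differentiable_on \<Omega>) \<and>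
     (\<forall>k l. continuous_on \<Omega> (pd l (pd k f)))"

definition SO3 :: "mat3 set" where
  "SO3 = {Q. orthogonal_matrix Q \<and> det Q = 1}"

definition curlM :: "(real^3 \<Rightarrow> mat3) \<Rightarrow> real^3 \<Rightarrow> mat3" where
  "curlM R x = (\<chi> i j. \<Sum>k\<in>UNIV. \<Sum>l\<in>UNIV. eps j k l * (pd k R x $ i $ l))"

definition divM :: "(real^3 \<Rightarrow> mat3) \<Rightarrow> real^3 \<Rightarrow> real^3" where
  "divM R x = (\<chi> i. \<Sum>l\<in>UNIV. pd l R x $ i $ l)"

definition gradRow :: "(real^3 \<Rightarrow> mat3) \<Rightarrow> 3 \<Rightarrow> real^3 \<Rightarrow> mat3" where
  "gradRow R i x = (\<chi> l m. pd m R x $ i $ l)"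

definition grad :: "(real^3 \<Rightarrow> real) \<Rightarrow> real^3 \<Rightarrow> real^3" where
  "grad f x = (\<chi> m. pd m f x)"

definition fnorm2 :: "mat3 \<Rightarrow> real" where
  "fnorm2 A = trace (transpose A ** A)"

definition msym :: "mat3 \<Rightarrow> mat3" where
  "msym A = (1/2) *\<^sub>R (A + transpose A)"

definition mskew :: "mat3 \<Rightarrow> mat3" where
  "mskew A = (1/2) *\<^sub>R (A - transpose A)"

end

theory Submission
  imports Defs
begin

(*
  Fix a point and write A_m = R^T \<partial>_m R, which is skew because R^T R = Id, and
  M = R^T \<alpha>. The curl condition reads M_aq = \<epsilon>_qkl (A_k)_al. Since R is a rotation,
  \<epsilon>_ijk R_ja R_ks = R_ic \<epsilon>_cas, so contracting with \<epsilon> commutes with conjugation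
  by R; this reduces (i) to the identity \<epsilon>_caq M_aq = (A_l)_cl, which follows from
  the skew-symmetry of the A_l.

  Differentiating the constant curl shows that every \<nabla>(\<partial>_n R_i) is symmetric;
  together with the symmetry of second derivatives this gives \<Delta>R_i = \<nabla>(div R_i),
  hence (ii) by (i). Differentiating R^T \<partial>_m R + \<partial>_m R^T R = 0 once more gives
  |\<nabla>R|^2 = - R : \<Delta>R, and expressing R : \<Delta>R through A and M yields (iii).
  The remaining items are pointwise identities for 3x3 matrices.
*)

lemma eps_simps [simp]:
  "eps 1 1 1 = 0" "eps 1 1 2 = 0" "eps 1 1 3 = 0" "eps 1 2 1 = 0" "eps 1 2 2 = 0" "eps 1 2 3 = 1"
  "eps 1 3 1 = 0" "eps 1 3 2 = -1" "eps 1 3 3 = 0"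
  "eps 2 1 1 = 0" "eps 2 1 2 = 0" "eps 2 1 3 = -1" "eps 2 2 1 = 0" "eps 2 2 2 = 0" "eps 2 2 3 = 0"
  "eps 2 3 1 = 1" "eps 2 3 2 = 0" "eps 2 3 3 = 0"
  "eps 3 1 1 = 0" "eps 3 1 2 = 1" "eps 3 1 3 = 0" "eps 3 2 1 = -1" "eps 3 2 2 = 0" "eps 3 2 3 = 0"
  "eps 3 3 1 = 0" "eps 3 3 2 = 0" "eps 3 3 3 = 0"
  by (simp_all add: eps_def)

lemma eps_swap: "eps j i k = - eps i j k"
  using exhaust_3[of i] exhaust_3[of j] exhaust_3[of k] by auto

lemma eps_contraction_zero_imp_symmetric:
  assumes "\<And>b. (\<Sum>k\<in>UNIV. \<Sum>l\<in>UNIV. eps b k l * X k l) = 0"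
  shows "X k l = X l k"
  using assms[of 1] assms[of 2] assms[of 3] exhaust_3[of k] exhaust_3[of l]
  by (auto simp: sum_3)

lemma cross3_nth_eps: "cross3 a b $ i = (\<Sum>j\<in>UNIV. \<Sum>k\<in>UNIV. eps i j k * a $ j * b $ k)"
  using exhaust_3[of i] by (auto simp: cross3_def sum_3)

lemma SO3_eps_columns:
  assumes "Q \<in> SO3"
  shows "(\<Sum>j\<in>UNIV. \<Sum>k\<in>UNIV. eps i j k * Q $ j $ s * Q $ k $ t) = (\<Sum>c\<in>UNIV. Q $ i $ c * eps c s t)"
proof -
  have "cross3 (Q *v axis s 1) (Q *v axis t 1) = Q *v cross3 (axis s 1) (axis t 1)"
    using assms by (simp add: SO3_def rotation_matrix_def cross_rotation_matrix)
  then show ?thesis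
    by (simp add: vec_eq_iff cross3_nth_eps matrix_vector_mult_def axis_def
        if_distrib [of "\<lambda>x. y * x" for y] cong: if_cong)
qed

(* On the cross-product matrix W of w (W v = w \<times> v) this gives axial W = -2 w. *)
definition axial :: "mat3 \<Rightarrow> real^3" where
  "axial X = (\<chi> i. \<Sum>j\<in>UNIV. \<Sum>k\<in>UNIV. eps i j k * X $ j $ k)"

lemma axial_mult_transpose:
  "axial (A ** transpose B) $ i = (\<Sum>j\<in>UNIV. \<Sum>k\<in>UNIV. eps i j k * (A $ j \<bullet> B $ k))"
  by (simp add: axial_def matrix_matrix_mult_def transpose_def inner_vec_def)

lemma axial_rotation_conj:
  assumes "Q \<in> SO3"
  shows "axial (Q ** X ** transpose Q) = Q *v axial X"
proof -
  have "axial (Q ** X ** transpose Q) $ i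
      = (\<Sum>a\<in>UNIV. \<Sum>s\<in>UNIV. X $ a $ s * (\<Sum>j\<in>UNIV. \<Sum>k\<in>UNIV. eps i j k * Q $ j $ a * Q $ k $ s))"
    for i
    unfolding axial_def matrix_matrix_mult_def transpose_def
    by (simp only: vec_lambda_beta sum_3 ring_distribs) (simp only: ac_simps)
  also have "\<dots> i = (Q *v axial X) $ i" for i
    unfolding SO3_eps_columns[OF assms] axial_def matrix_vector_mult_def
    by (simp only: vec_lambda_beta sum_3 ring_distribs) (simp only: ac_simps)
  finally show ?thesis by (simp add: vec_eq_iff)
qed

lemma linear_axial: "linear axial"
  by (simp add: linear_iff axial_def vec_eq_iff sum.distrib sum_distrib_left algebra_simps)

lemma norm_axial_squared: "(norm (axial X))\<^sup>2 = 2 * fnorm2 (mskew X)"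
  unfolding power2_norm_eq_inner
  by (simp add: inner_vec_def axial_def fnorm2_def mskew_def trace_def
      matrix_matrix_mult_def transpose_def sum_3 algebra_simps power2_eq_square)

lemma fnorm2_eq_sum_squares: "fnorm2 A = (\<Sum>i\<in>UNIV. \<Sum>j\<in>UNIV. (A $ i $ j)\<^sup>2)"
  by (simp add: fnorm2_def trace_def matrix_matrix_mult_def transpose_def power2_eq_square)
    (rule sum.swap)

lemma trace_transpose: "trace (transpose A) = trace A"
  by (simp add: trace_def transpose_def)

lemma trace_square_eq_sym_skew: "trace (M ** M) = fnorm2 (msym M) - fnorm2 (mskew M)"
  by (simp add: fnorm2_def msym_def mskew_def trace_def matrix_matrix_mult_def transpose_def
      sum_3 algebra_simps power2_eq_square)

lemma trace_sq_le_fnorm2_msym: "(trace G)\<^sup>2 / 3 \<le> fnorm2 (msym G)"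
proof -
  have "3 * fnorm2 (msym G) - (trace G)\<^sup>2
      = (G$1$1 - G$2$2)\<^sup>2 + (G$1$1 - G$3$3)\<^sup>2 + (G$2$2 - G$3$3)\<^sup>2
        + 3 / 2 * ((G$1$2 + G$2$1)\<^sup>2 + (G$1$3 + G$3$1)\<^sup>2 + (G$2$3 + G$3$2)\<^sup>2)"
    by (simp add: fnorm2_def msym_def trace_def matrix_matrix_mult_def transpose_def sum_3
        power2_eq_square field_simps)
  moreover have "0 \<le> (G$1$1 - G$2$2)\<^sup>2 + (G$1$1 - G$3$3)\<^sup>2 + (G$2$2 - G$3$3)\<^sup>2
        + 3 / 2 * ((G$1$2 + G$2$1)\<^sup>2 + (G$1$3 + G$3$1)\<^sup>2 + (G$2$3 + G$3$2)\<^sup>2)"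
    by simp
  ultimately show ?thesis
    by linarith
qed

lemma sum_fnorm2_mskew_eq_half_fnorm2_curl:
  fixes D :: "3 \<Rightarrow> mat3"
  shows "(\<Sum>i\<in>UNIV. fnorm2 (mskew (\<chi> l m. D m $ i $ l)))
    = fnorm2 (\<chi> i j. \<Sum>k\<in>UNIV. \<Sum>l\<in>UNIV. eps j k l * D k $ i $ l) / 2"
  by (simp add: fnorm2_def mskew_def trace_def matrix_matrix_mult_def transpose_def sum_3
      algebra_simps power2_eq_square)

(* Pointwise algebra at a point x: Q stands for R x and D m for pd m R x, so that
   transpose Q ** D m is the skew matrix A_m and transpose Q ** \<alpha> is M. *)
context
  fixes Q :: mat3 and D :: "3 \<Rightarrow> mat3" and \<alpha> :: mat3
  assumes rotation: "Q \<in> SO3"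
    and orthogonal_derivative: "\<And>m. transpose Q ** D m + transpose (D m) ** Q = 0"
    and curl: "\<alpha> = (\<chi> i j. \<Sum>k\<in>UNIV. \<Sum>l\<in>UNIV. eps j k l * D k $ i $ l)"
begin

lemma connection_skew: "(transpose Q ** D m) $ p $ l = - (transpose Q ** D m) $ l $ p"
proof -
  have "transpose (transpose Q ** D m) = - (transpose Q ** D m)"
    using orthogonal_derivative[of m]
    by (simp add: matrix_transpose_mul eq_neg_iff_add_eq_0 add.commute)
  then have "transpose (transpose Q ** D m) $ l $ p = - (transpose Q ** D m) $ l $ p"
    by simp
  then show ?thesis by (simp add: transpose_def)
qed

lemma rotation_mult_transpose: "Q ** transpose Q = mat 1" "transpose Q ** Q = mat 1"
  using rotation by (simp_all add: SO3_def orthogonal_matrix_def)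

lemma left_mult_transpose_cancel: "Q ** (transpose Q ** B) = B"
  by (simp add: matrix_mul_assoc rotation_mult_transpose)

lemma rotated_curl:
  "(transpose Q ** \<alpha>) $ a $ q = (\<Sum>k\<in>UNIV. \<Sum>l\<in>UNIV. eps q k l * (transpose Q ** D k) $ a $ l)"
proof -
  have "(transpose Q ** \<alpha>) $ a $ q
      = (\<Sum>i\<in>UNIV. Q $ i $ a * (\<Sum>k\<in>UNIV. \<Sum>l\<in>UNIV. eps q k l * D k $ i $ l))"
    unfolding curl by (simp add: matrix_matrix_mult_def transpose_def)
  also have "\<dots> = (\<Sum>i\<in>UNIV. \<Sum>k\<in>UNIV. \<Sum>l\<in>UNIV. eps q k l * (Q $ i $ a * D k $ i $ l))"
    by (simp only: sum_distrib_left mult.left_commute)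
  also have "\<dots> = (\<Sum>k\<in>UNIV. \<Sum>l\<in>UNIV. \<Sum>i\<in>UNIV. eps q k l * (Q $ i $ a * D k $ i $ l))"
    by (subst sum.swap) (rule sum.cong[OF refl sum.swap])
  finally show ?thesis
    by (simp add: matrix_matrix_mult_def transpose_def sum_distrib_left)
qed

lemma rotated_curl_transpose:
  "(transpose Q ** \<alpha>) $ p $ a = (\<Sum>l\<in>UNIV. \<Sum>s\<in>UNIV. eps l a s * (transpose Q ** D l) $ s $ p)"
  unfolding rotated_curl
proof (intro sum.cong refl)
  fix k l
  show "eps a k l * (transpose Q ** D k) $ p $ l = eps k a l * (transpose Q ** D k) $ l $ p"
    using eps_swap[of a k l] connection_skew[of k p l] by simp
qed

lemma rotated_curl_contraction:
  "(\<Sum>a\<in>UNIV. \<Sum>p\<in>UNIV. eps c a p * (transpose Q ** \<alpha>) $ a $ p)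
    = (\<Sum>l\<in>UNIV. (transpose Q ** D l) $ c $ l)"
proof -
  define A where "A m = transpose Q ** D m" for m
  have skew: "A m $ p $ l = - A m $ l $ p" for m p l
    unfolding A_def by (rule connection_skew)
  have "A m $ p $ p = 0" "A m $ 2 $ 1 = - A m $ 1 $ 2" "A m $ 3 $ 1 = - A m $ 1 $ 3"
    "A m $ 3 $ 2 = - A m $ 2 $ 3" for m p
    using skew[of m p p] skew[of m 2 1] skew[of m 3 1] skew[of m 3 2] by simp_all
  then show ?thesis
    unfolding rotated_curl A_def[symmetric] using exhaust_3[of c]
    by (elim disjE) (simp_all add: sum_3)
qed

lemma divergence_identity: "(\<chi> i. \<Sum>l\<in>UNIV. D l $ i $ l) = axial (\<alpha> ** transpose Q)"
proof -
  define M where "M = transpose Q ** \<alpha>"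
  define A where "A m = transpose Q ** D m" for m
  have "\<alpha> ** transpose Q = Q ** M ** transpose Q"
    by (simp add: M_def left_mult_transpose_cancel)
  then have "axial (\<alpha> ** transpose Q) = Q *v axial M"
    by (simp add: axial_rotation_conj[OF rotation])
  also have "axial M = (\<chi> c. \<Sum>l\<in>UNIV. A l $ c $ l)"
    by (simp add: vec_eq_iff axial_def M_def A_def rotated_curl_contraction)
  also have "(Q *v (\<chi> c. \<Sum>l\<in>UNIV. A l $ c $ l)) $ i = (\<Sum>l\<in>UNIV. (Q ** A l) $ i $ l)" for i
    by (simp add: matrix_vector_mult_def matrix_matrix_mult_def sum_distrib_left) (rule sum.swap)
  then have "Q *v (\<chi> c. \<Sum>l\<in>UNIV. A l $ c $ l) = (\<chi> i. \<Sum>l\<in>UNIV. D l $ i $ l)"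
    by (simp add: vec_eq_iff A_def left_mult_transpose_cancel)
  finally show ?thesis ..
qed

lemma trace_identity:
  "(\<Sum>i\<in>UNIV. \<Sum>l\<in>UNIV. Q $ i $ l * axial (\<alpha> ** transpose (D l)) $ i)
     = trace (transpose Q ** \<alpha> ** transpose Q ** \<alpha>)"
proof -
  define M where "M = transpose Q ** \<alpha>"
  define A where "A m = transpose Q ** D m" for m
  have "\<alpha> ** transpose (D l) = Q ** (M ** transpose (A l)) ** transpose Q" for l
    by (simp add: M_def A_def matrix_transpose_mul matrix_mul_assoc[symmetric]
        left_mult_transpose_cancel rotation_mult_transpose)
  then have rotated:
    "transpose Q *v axial (\<alpha> ** transpose (D l)) = axial (M ** transpose (A l))" for l
    by (simp add: axial_rotation_conj[OF rotation] matrix_vector_mul_assoc rotation_mult_transpose)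
  have "(\<Sum>i\<in>UNIV. \<Sum>l\<in>UNIV. Q $ i $ l * axial (\<alpha> ** transpose (D l)) $ i)
      = (\<Sum>l\<in>UNIV. (transpose Q *v axial (\<alpha> ** transpose (D l))) $ l)"
    by (subst sum.swap) (simp add: matrix_vector_mult_def transpose_def)
  also have "\<dots> = (\<Sum>l\<in>UNIV. \<Sum>a\<in>UNIV. \<Sum>s\<in>UNIV. eps l a s * (\<Sum>p\<in>UNIV. M $ a $ p * A l $ s $ p))"
    unfolding rotated by (simp add: axial_def matrix_matrix_mult_def transpose_def)
  also have "\<dots> = (\<Sum>a\<in>UNIV. \<Sum>p\<in>UNIV. M $ a $ p * (\<Sum>l\<in>UNIV. \<Sum>s\<in>UNIV. eps l a s * A l $ s $ p))"
    by (simp only: sum_3 ring_distribs) (simp only: ac_simps)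
  also have "\<dots> = (\<Sum>a\<in>UNIV. \<Sum>p\<in>UNIV. M $ a $ p * M $ p $ a)"
    by (simp add: M_def A_def rotated_curl_transpose)
  also have "\<dots> = trace (M ** M)"
    by (simp add: trace_def matrix_matrix_mult_def)
  finally show ?thesis
    by (simp add: M_def matrix_mul_assoc)
qed

end

lemma second_difference_mean_value:
  fixes f :: "'a::real_normed_vector \<Rightarrow> real"
  assumes "0 < h"
    and diff: "\<And>t c. 0 \<le> t \<Longrightarrow> t \<le> h \<Longrightarrow> c \<in> {0, h *\<^sub>R v} \<Longrightarrow> f differentiable (at (x + t *\<^sub>R u + c))"
  obtains \<xi> where "0 < \<xi>" "\<xi> < h"
    "f (x + h *\<^sub>R u + h *\<^sub>R v) - f (x + h *\<^sub>R u) - f (x + h *\<^sub>R v) + f x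
       = h * (frechet_derivative f (at (x + \<xi> *\<^sub>R u + h *\<^sub>R v)) u
              - frechet_derivative f (at (x + \<xi> *\<^sub>R u)) u)"
proof -
  define fu where "fu y = frechet_derivative f (at y) u" for y
  have slice: "((\<lambda>t. f (x + t *\<^sub>R u + c)) has_derivative (\<lambda>s. s * fu (x + t *\<^sub>R u + c)))
      (at t within {0..h})"
    if "0 \<le> t" "t \<le> h" "c \<in> {0, h *\<^sub>R v}" for t c
  proof -
    have fd: "f differentiable (at (x + t *\<^sub>R u + c))"
      using diff that .
    have "((\<lambda>t. x + t *\<^sub>R u + c) has_derivative (\<lambda>s. s *\<^sub>R u)) (at t within {0..h})"
      by (auto intro!: derivative_eq_intros)
    from has_derivative_compose[OF this fd[unfolded frechet_derivative_works]]
    have "((\<lambda>t. f (x + t *\<^sub>R u + c)) has_derivative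
        (\<lambda>s. frechet_derivative f (at (x + t *\<^sub>R u + c)) (s *\<^sub>R u))) (at t within {0..h})" .
    moreover have
      "frechet_derivative f (at (x + t *\<^sub>R u + c)) (s *\<^sub>R u) = s * fu (x + t *\<^sub>R u + c)" for s
      using linear_frechet_derivative[OF fd] by (simp add: fu_def linear_scale)
    ultimately show ?thesis by simp
  qed
  have "((\<lambda>t. f (x + t *\<^sub>R u + h *\<^sub>R v) - f (x + t *\<^sub>R u + 0)) has_derivative
      (\<lambda>s. s * (fu (x + t *\<^sub>R u + h *\<^sub>R v) - fu (x + t *\<^sub>R u + 0)))) (at t within {0..h})"
    if "0 \<le> t" "t \<le> h" for t
    using has_derivative_diff[OF slice[of t "h *\<^sub>R v"] slice[of t 0]] that
    by (simp add: right_diff_distrib)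
  from mvt_simple[OF \<open>0 < h\<close> this] obtain \<xi> where "\<xi> \<in> {0<..<h}"
    "f (x + h *\<^sub>R u + h *\<^sub>R v) - f (x + h *\<^sub>R u + 0) - (f (x + 0 *\<^sub>R u + h *\<^sub>R v) - f (x + 0 *\<^sub>R u + 0))
      = (h - 0) * (fu (x + \<xi> *\<^sub>R u + h *\<^sub>R v) - fu (x + \<xi> *\<^sub>R u + 0))"
    by blast
  then show thesis
    by (intro that[of \<xi>]) (auto simp: fu_def algebra_simps)
qed

lemma norm_scaleR_add_le:
  assumes "0 \<le> t" "t \<le> h" "0 \<le> s" "s \<le> h"
  shows "norm (t *\<^sub>R u + s *\<^sub>R v) \<le> h * (norm u + norm v)"
proof -
  have "norm (t *\<^sub>R u + s *\<^sub>R v) \<le> t * norm u + s * norm v"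
    using assms norm_triangle_ineq[of "t *\<^sub>R u" "s *\<^sub>R v"] by simp
  also have "\<dots> \<le> h * norm u + h * norm v"
    using assms by (intro add_mono mult_right_mono) auto
  finally show ?thesis by (simp add: distrib_left)
qed

lemma second_difference_bound:
  fixes g :: "'a::real_normed_vector \<Rightarrow> real"
  assumes "linear L" "0 \<le> h" "0 \<le> c"
    and approx: "\<And>w. norm w \<le> r \<Longrightarrow> \<bar>g (x + w) - g x - L w\<bar> \<le> c * norm w"
    and "norm (t *\<^sub>R u + h *\<^sub>R v) \<le> r" "norm (t *\<^sub>R u) \<le> r"
  shows "\<bar>h * (g (x + (t *\<^sub>R u + h *\<^sub>R v)) - g (x + t *\<^sub>R u)) - h\<^sup>2 * L v\<bar> \<le> 2 * h * (c * r)"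
proof -
  let ?A = "g (x + (t *\<^sub>R u + h *\<^sub>R v)) - g x - L (t *\<^sub>R u + h *\<^sub>R v)"
  let ?B = "g (x + t *\<^sub>R u) - g x - L (t *\<^sub>R u)"
  have approx': "\<bar>g (x + w) - g x - L w\<bar> \<le> c * r" if "norm w \<le> r" for w
    using approx[OF that] mult_left_mono[OF that \<open>0 \<le> c\<close>] by linarith
  have "L (t *\<^sub>R u + h *\<^sub>R v) = L (t *\<^sub>R u) + h * L v"
    using \<open>linear L\<close> by (simp add: linear_add linear_scale)
  then have "h * (g (x + (t *\<^sub>R u + h *\<^sub>R v)) - g (x + t *\<^sub>R u)) - h\<^sup>2 * L v = h * (?A - ?B)"
    by (simp add: power2_eq_square algebra_simps)
  then have "\<bar>h * (g (x + (t *\<^sub>R u + h *\<^sub>R v)) - g (x + t *\<^sub>R u)) - h\<^sup>2 * L v\<bar> = h * \<bar>?A - ?B\<bar>"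
    using \<open>0 \<le> h\<close> by (simp add: abs_mult)
  also have "\<dots> \<le> h * (\<bar>?A\<bar> + \<bar>?B\<bar>)"
    using \<open>0 \<le> h\<close> by (intro mult_left_mono abs_triangle_ineq4)
  also have "\<dots> \<le> h * (c * r + c * r)"
    using \<open>0 \<le> h\<close> assms(5,6) by (intro mult_left_mono add_mono approx')
  finally show ?thesis by simp
qed

lemma second_difference_estimate:
  fixes f :: "'a::real_normed_vector \<Rightarrow> real"
  assumes "open S" "x \<in> S" and diff: "\<And>y. y \<in> S \<Longrightarrow> f differentiable (at y)"
    and L: "((\<lambda>y. frechet_derivative f (at y) u) has_derivative L) (at x)" and "0 < e"
  obtains d where "0 < d" "\<And>h. 0 < h \<Longrightarrow> h < d \<Longrightarrow>
    \<bar>f (x + h *\<^sub>R u + h *\<^sub>R v) - f (x + h *\<^sub>R u) - f (x + h *\<^sub>R v) + f x - h\<^sup>2 * L v\<bar> \<le> e * h\<^sup>2"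
proof -
  define fu where "fu y = frechet_derivative f (at y) u" for y
  define N where "N = norm u + norm v + 1"
  have "N > 0" by (simp add: N_def add_nonneg_pos)
  obtain d1 where "0 < d1" and d1: "\<And>y. norm (y - x) < d1 \<Longrightarrow>
      \<bar>fu y - fu x - L (y - x)\<bar> \<le> e / (2 * N) * norm (y - x)"
    using L \<open>0 < e\<close> \<open>N > 0\<close> unfolding has_derivative_at_alt fu_def[symmetric]
    by (metis divide_pos_pos real_norm_def zero_less_mult_iff zero_less_numeral)
  obtain d0 where "0 < d0" "ball x d0 \<subseteq> S"
    using \<open>open S\<close> \<open>x \<in> S\<close> openE by blast
  show thesis
  proof (rule that[of "min d0 d1 / N"])
    show "0 < min d0 d1 / N" using \<open>0 < d0\<close> \<open>0 < d1\<close> \<open>N > 0\<close> by simp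
    fix h :: real assume "0 < h" "h < min d0 d1 / N"
    then have "h * N < d0" "h * N < d1"
      using \<open>N > 0\<close> by (simp_all add: less_divide_eq)
    have near: "norm (t *\<^sub>R u + s *\<^sub>R v) \<le> h * N" if "0 \<le> t" "t \<le> h" "0 \<le> s" "s \<le> h" for t s
      using norm_scaleR_add_le[OF that, of u v] \<open>0 < h\<close> by (simp add: N_def distrib_left)
    have "dist x (x + w) = norm w" for w
      by (metis add_diff_cancel_left' dist_commute dist_norm)
    then have "f differentiable (at (x + t *\<^sub>R u + c))" if "0 \<le> t" "t \<le> h" "c \<in> {0, h *\<^sub>R v}" for t c
      using near[OF that(1,2), of 0] near[OF that(1,2), of h] that \<open>0 < h\<close> \<open>h * N < d0\<close>
      by (intro diff subsetD[OF \<open>ball x d0 \<subseteq> S\<close>]) (auto simp: add.assoc)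
    from second_difference_mean_value[OF \<open>0 < h\<close> this] obtain \<xi> where \<xi>: "0 < \<xi>" "\<xi> < h"
      "f (x + h *\<^sub>R u + h *\<^sub>R v) - f (x + h *\<^sub>R u) - f (x + h *\<^sub>R v) + f x
        = h * (fu (x + (\<xi> *\<^sub>R u + h *\<^sub>R v)) - fu (x + \<xi> *\<^sub>R u))"
      unfolding fu_def add.assoc by blast
    have "\<bar>h * (fu (x + (\<xi> *\<^sub>R u + h *\<^sub>R v)) - fu (x + \<xi> *\<^sub>R u)) - h\<^sup>2 * L v\<bar>
        \<le> 2 * h * (e / (2 * N) * (h * N))"
      using near[of \<xi> h] near[of \<xi> 0] \<xi>(1,2) \<open>0 < h\<close> \<open>0 < e\<close> \<open>N > 0\<close>
        d1[of "x + w" for w] \<open>h * N < d1\<close>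
      by (intro second_difference_bound[OF has_derivative_linear[OF L]]) auto
    also have "\<dots> = e * h\<^sup>2"
      using \<open>N > 0\<close> by (simp add: power2_eq_square)
    finally show "\<bar>f (x + h *\<^sub>R u + h *\<^sub>R v) - f (x + h *\<^sub>R u) - f (x + h *\<^sub>R v) + f x - h\<^sup>2 * L v\<bar>
        \<le> e * h\<^sup>2"
      unfolding \<xi>(3) .
  qed
qed

lemma second_difference_quotient_tendsto:
  fixes f :: "'a::real_normed_vector \<Rightarrow> real"
  assumes "open S" "x \<in> S" "\<And>y. y \<in> S \<Longrightarrow> f differentiable (at y)"
    and "((\<lambda>y. frechet_derivative f (at y) u) has_derivative L) (at x)"
  shows "((\<lambda>h. (f (x + h *\<^sub>R u + h *\<^sub>R v) - f (x + h *\<^sub>R u) - f (x + h *\<^sub>R v) + f x) / h\<^sup>2)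
    \<longlongrightarrow> L v) (at_right 0)"
proof (rule tendstoI)
  fix e :: real assume "0 < e"
  obtain d where "0 < d" and d: "\<And>h. 0 < h \<Longrightarrow> h < d \<Longrightarrow>
    \<bar>f (x + h *\<^sub>R u + h *\<^sub>R v) - f (x + h *\<^sub>R u) - f (x + h *\<^sub>R v) + f x - h\<^sup>2 * L v\<bar> \<le> e / 2 * h\<^sup>2"
    using second_difference_estimate[OF assms half_gt_zero[OF \<open>0 < e\<close>], where v = v] by blast
  have "dist ((f (x + h *\<^sub>R u + h *\<^sub>R v) - f (x + h *\<^sub>R u) - f (x + h *\<^sub>R v) + f x) / h\<^sup>2) (L v) < e"
    if "0 < h" "h < d" for h
  proof -
    let ?A = "f (x + h *\<^sub>R u + h *\<^sub>R v) - f (x + h *\<^sub>R u) - f (x + h *\<^sub>R v) + f x"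
    have "?A / h\<^sup>2 - L v = (?A - h\<^sup>2 * L v) / h\<^sup>2"
      using \<open>0 < h\<close> by (simp add: field_simps)
    then have "dist (?A / h\<^sup>2) (L v) = \<bar>?A - h\<^sup>2 * L v\<bar> / h\<^sup>2"
      by (simp add: dist_real_def abs_divide)
    also have "\<dots> \<le> e / 2"
      using d[OF that] \<open>0 < h\<close> by (simp add: divide_le_eq)
    finally show ?thesis using \<open>0 < e\<close> by linarith
  qed
  then show "\<forall>\<^sub>F h in at_right 0.
    dist ((f (x + h *\<^sub>R u + h *\<^sub>R v) - f (x + h *\<^sub>R u) - f (x + h *\<^sub>R v) + f x) / h\<^sup>2) (L v) < e"
    unfolding eventually_at_right_field using \<open>0 < d\<close> by (intro exI[of _ d]) auto
qed

lemma frechet_derivative_commute: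
  fixes f :: "'a::real_normed_vector \<Rightarrow> real"
  assumes "open S" "x \<in> S" "\<And>y. y \<in> S \<Longrightarrow> f differentiable (at y)"
    and "(\<lambda>y. frechet_derivative f (at y) u) differentiable (at x)"
    and "(\<lambda>y. frechet_derivative f (at y) v) differentiable (at x)"
  shows "frechet_derivative (\<lambda>y. frechet_derivative f (at y) u) (at x) v
       = frechet_derivative (\<lambda>y. frechet_derivative f (at y) v) (at x) u"
proof -
  let ?\<Delta> = "\<lambda>h. (f (x + h *\<^sub>R u + h *\<^sub>R v) - f (x + h *\<^sub>R u) - f (x + h *\<^sub>R v) + f x) / h\<^sup>2"
  have "(?\<Delta> \<longlongrightarrow> frechet_derivative (\<lambda>y. frechet_derivative f (at y) u) (at x) v) (at_right 0)"
    by (rule second_difference_quotient_tendsto[OF assms(1-3)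
          assms(4)[unfolded frechet_derivative_works]])
  moreover have "?\<Delta> = (\<lambda>h. (f (x + h *\<^sub>R v + h *\<^sub>R u) - f (x + h *\<^sub>R v) - f (x + h *\<^sub>R u) + f x) / h\<^sup>2)"
    by (simp add: algebra_simps)
  then have "(?\<Delta> \<longlongrightarrow> frechet_derivative (\<lambda>y. frechet_derivative f (at y) v) (at x) u) (at_right 0)"
    using second_difference_quotient_tendsto[OF assms(1-3)]
      assms(5)[unfolded frechet_derivative_works]
    by simp
  ultimately show ?thesis
    by (rule tendsto_unique[OF trivial_limit_at_right_real])
qed

lemma bounded_bilinear_matrix_mult:
  "bounded_bilinear ((**) :: real^'n^'m \<Rightarrow> real^'p^'n \<Rightarrow> real^'p^'m)"
  unfolding bilinear_conv_bounded_bilinear[symmetric] bilinear_def linear_iff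
  by (simp add: matrix_matrix_mult_def vec_eq_iff algebra_simps sum.distrib sum_distrib_left)

lemma bounded_linear_transpose: "bounded_linear (transpose :: real^'n^'m \<Rightarrow> real^'m^'n)"
  unfolding linear_conv_bounded_linear[symmetric] linear_iff
  by (simp add: transpose_def vec_eq_iff)

lemma bounded_linear_mat_nth: "bounded_linear (\<lambda>M :: 'a::real_normed_vector^'n^'m. M $ i $ j)"
  using bounded_linear_compose[OF bounded_linear_vec_nth bounded_linear_vec_nth] .

lemma bounded_linear_axial_mult_transpose: "bounded_linear (\<lambda>M. axial (A ** transpose M) $ i)"
proof -
  have "bounded_linear axial"
    using linear_axial linear_conv_bounded_linear by blast
  then show ?thesis
    by (intro bounded_linear_compose[OF bounded_linear_vec_nth]
        bounded_linear_compose[OF _ bounded_linear_transpose]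
        bounded_linear_compose[OF _
          bounded_bilinear.bounded_linear_right[OF bounded_bilinear_matrix_mult]])
qed

lemma pd_has_derivative: "(f has_derivative f') (at x) \<Longrightarrow> pd k f x = f' (axis k 1)"
  unfolding pd_def by (metis frechet_derivative_at)

lemma pd_bounded_linear:
  assumes "bounded_linear L" "f differentiable (at x)"
  shows "pd k (\<lambda>y. L (f y)) x = L (pd k f x)" "(\<lambda>y. L (f y)) differentiable (at x)"
proof -
  have D: "((\<lambda>y. L (f y)) has_derivative (\<lambda>h. L (frechet_derivative f (at x) h))) (at x)"
    using bounded_linear.has_derivative[OF assms(1) assms(2)[unfolded frechet_derivative_works]] .
  show "pd k (\<lambda>y. L (f y)) x = L (pd k f x)"
    using pd_has_derivative[OF D] by (simp add: pd_def)
  show "(\<lambda>y. L (f y)) differentiable (at x)"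
    using D differentiable_def by blast
qed

lemma pd_add:
  assumes "f differentiable (at x)" "g differentiable (at x)"
  shows "pd k (\<lambda>y. f y + g y) x = pd k f x + pd k g x" "(\<lambda>y. f y + g y) differentiable (at x)"
proof -
  have D: "((\<lambda>y. f y + g y) has_derivative
      (\<lambda>h. frechet_derivative f (at x) h + frechet_derivative g (at x) h)) (at x)"
    using assms unfolding frechet_derivative_works by (rule has_derivative_add)
  show "pd k (\<lambda>y. f y + g y) x = pd k f x + pd k g x"
    using pd_has_derivative[OF D] by (simp add: pd_def)
  show "(\<lambda>y. f y + g y) differentiable (at x)"
    using D differentiable_def by blast
qed

lemma pd_sum:
  assumes "\<And>a. a \<in> A \<Longrightarrow> f a differentiable (at x)"
  shows "pd k (\<lambda>y. \<Sum>a\<in>A. f a y) x = (\<Sum>a\<in>A. pd k (f a) x)" "(\<lambda>y. \<Sum>a\<in>A. f a y) differentiable (at x)"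
proof -
  have D: "((\<lambda>y. \<Sum>a\<in>A. f a y) has_derivative (\<lambda>h. \<Sum>a\<in>A. frechet_derivative (f a) (at x) h)) (at x)"
    using assms by (intro has_derivative_sum) (simp add: frechet_derivative_works)
  show "pd k (\<lambda>y. \<Sum>a\<in>A. f a y) x = (\<Sum>a\<in>A. pd k (f a) x)"
    using pd_has_derivative[OF D] by (simp add: pd_def)
  show "(\<lambda>y. \<Sum>a\<in>A. f a y) differentiable (at x)"
    using D differentiable_def by blast
qed

lemma pd_matrix_mult:
  fixes A :: "real^3 \<Rightarrow> real^'n^'m" and B :: "real^3 \<Rightarrow> real^'p^'n"
  assumes "A differentiable (at x)" "B differentiable (at x)"
  shows "pd k (\<lambda>y. A y ** B y) x = A x ** pd k B x + pd k A x ** B x"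
    "(\<lambda>y. A y ** B y) differentiable (at x)"
proof -
  have D: "((\<lambda>y. A y ** B y) has_derivative
      (\<lambda>h. A x ** frechet_derivative B (at x) h + frechet_derivative A (at x) h ** B x)) (at x)"
    using assms unfolding frechet_derivative_works
    by (rule bounded_bilinear.FDERIV[OF bounded_bilinear_matrix_mult])
  show "pd k (\<lambda>y. A y ** B y) x = A x ** pd k B x + pd k A x ** B x"
    using pd_has_derivative[OF D] by (simp add: pd_def)
  show "(\<lambda>y. A y ** B y) differentiable (at x)"
    using D differentiable_def by blast
qed

lemma pd_eq_on_open:
  assumes "open S" "x \<in> S" "f differentiable (at x)" "\<And>y. y \<in> S \<Longrightarrow> g y = f y"
  shows "pd k g x = pd k f x" "g differentiable (at x)"
proof -
  have D: "(g has_derivative frechet_derivative f (at x)) (at x)"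
    using has_derivative_transform_within_open[OF assms(3)[unfolded frechet_derivative_works]
        assms(1,2)] assms(4)
    by simp
  show "pd k g x = pd k f x"
    using pd_has_derivative[OF D] by (simp add: pd_def)
  show "g differentiable (at x)"
    using D differentiable_def by blast
qed

lemma pd_const_on_open:
  assumes "open S" "x \<in> S" "\<And>y. y \<in> S \<Longrightarrow> f y = c"
  shows "pd k f x = 0"
  using pd_eq_on_open(1)[OF assms(1,2), of "\<lambda>y. c" f k] assms(3) by (simp add: pd_def)

lemma pd_mat_nth:
  "F differentiable (at x) \<Longrightarrow> pd k (\<lambda>y. F y $ i $ j) x = pd k F x $ i $ j"
  "F differentiable (at x) \<Longrightarrow> (\<lambda>y. F y $ i $ j) differentiable (at x)"
  using pd_bounded_linear[OF bounded_linear_mat_nth] by blast+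

lemma pd_transpose:
  fixes F :: "real^3 \<Rightarrow> real^'n^'m"
  shows "F differentiable (at x) \<Longrightarrow> pd k (\<lambda>y. transpose (F y)) x = transpose (pd k F x)"
    "F differentiable (at x) \<Longrightarrow> (\<lambda>y. transpose (F y)) differentiable (at x)"
  using pd_bounded_linear[OF bounded_linear_transpose] by blast+

lemma pd_commute:
  fixes F :: "real^3 \<Rightarrow> real^'n^'m"
  assumes "open S" "x \<in> S" "\<And>y. y \<in> S \<Longrightarrow> F differentiable (at y)"
    and "pd k F differentiable (at x)" "pd n F differentiable (at x)"
  shows "pd n (pd k F) x = pd k (pd n F) x"
proof -
  have "pd n (pd k F) x $ i $ j = pd k (pd n F) x $ i $ j" for i j
  proof -
    define f where "f = (\<lambda>y. F y $ i $ j)"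
    have pd_f: "pd m (pd l f) x = pd m (pd l F) x $ i $ j" "pd l f differentiable (at x)"
      if "pd l F differentiable (at x)" for l m
    proof -
      have "pd l f y = pd l F y $ i $ j" if "y \<in> S" for y
        unfolding f_def by (rule pd_mat_nth(1)[OF assms(3)[OF that]])
      from pd_eq_on_open[OF assms(1,2) pd_mat_nth(2)[OF \<open>pd l F differentiable (at x)\<close>] this]
      show "pd m (pd l f) x = pd m (pd l F) x $ i $ j" "pd l f differentiable (at x)"
        using pd_mat_nth(1)[OF \<open>pd l F differentiable (at x)\<close>] by simp_all
    qed
    have "pd n (pd k f) x = pd k (pd n f) x"
      using frechet_derivative_commute[OF assms(1,2) pd_mat_nth(2)[OF assms(3)],
          of i j "axis k 1" "axis n 1"]
        pd_f(2)[OF assms(4)] pd_f(2)[OF assms(5)] unfolding pd_def f_def by simp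
    then show ?thesis using pd_f(1)[OF assms(4)] pd_f(1)[OF assms(5)] by simp
  qed
  then show ?thesis by (simp add: vec_eq_iff)
qed

lemma divM_eq_trace_gradRow: "divM R x $ i = trace (gradRow R i x)"
  by (simp add: divM_def gradRow_def trace_def)

lemma norm_divM_squared_le: "(norm (divM R x))\<^sup>2 / 3 \<le> (\<Sum>i\<in>UNIV. fnorm2 (msym (gradRow R i x)))"
proof -
  have "(norm (divM R x))\<^sup>2 / 3 = (\<Sum>i\<in>UNIV. (trace (gradRow R i x))\<^sup>2 / 3)"
    unfolding power2_norm_eq_inner inner_vec_def divM_eq_trace_gradRow
    by (simp add: power2_eq_square sum_divide_distrib)
  also have "\<dots> \<le> (\<Sum>i\<in>UNIV. fnorm2 (msym (gradRow R i x)))"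
    by (intro sum_mono trace_sq_le_fnorm2_msym)
  finally show ?thesis .
qed

lemma sum_fnorm2_mskew_gradRow: "(\<Sum>i\<in>UNIV. fnorm2 (mskew (gradRow R i x))) = fnorm2 (curlM R x) / 2"
  unfolding gradRow_def curlM_def by (rule sum_fnorm2_mskew_eq_half_fnorm2_curl)

locale rotation_field_with_constant_curl =
  fixes \<Omega> :: "(real^3) set" and R :: "real^3 \<Rightarrow> mat3" and \<alpha> :: mat3
  assumes open_domain: "open \<Omega>" and C2: "C2_on \<Omega> R"
    and rotation: "x \<in> \<Omega> \<Longrightarrow> R x \<in> SO3"
    and constant_curl: "x \<in> \<Omega> \<Longrightarrow> curlM R x = \<alpha>"
begin

lemma differentiable_R: "x \<in> \<Omega> \<Longrightarrow> R differentiable (at x)"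
  and differentiable_pd_R: "x \<in> \<Omega> \<Longrightarrow> pd k R differentiable (at x)"
  using C2 open_domain by (auto simp: C2_on_def differentiable_on_eq_differentiable_at)

lemma orthogonal_derivative:
  assumes "x \<in> \<Omega>"
  shows "transpose (R x) ** pd m R x + transpose (pd m R x) ** R x = 0"
proof -
  have "pd m (\<lambda>y. transpose (R y) ** R y) x = 0"
    using rotation by (intro pd_const_on_open[OF open_domain assms, of _ "mat 1"])
      (simp add: SO3_def orthogonal_matrix_def)
  then show ?thesis
    using differentiable_R[OF assms] by (simp add: pd_matrix_mult pd_transpose add.commute)
qed

lemma curl_eq: "x \<in> \<Omega> \<Longrightarrow> \<alpha> = (\<chi> i j. \<Sum>k\<in>UNIV. \<Sum>l\<in>UNIV. eps j k l * pd k R x $ i $ l)"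
  using constant_curl by (simp add: curlM_def)

lemma divergence_eq: "x \<in> \<Omega> \<Longrightarrow> divM R x = axial (\<alpha> ** transpose (R x))"
  using divergence_identity[OF rotation orthogonal_derivative curl_eq] by (simp add: divM_def)

lemma divergence_components:
  "x \<in> \<Omega> \<Longrightarrow> divM R x $ i = (\<Sum>j\<in>UNIV. \<Sum>k\<in>UNIV. eps i j k * (\<alpha> $ j \<bullet> R x $ k))"
  by (simp add: divergence_eq axial_mult_transpose)

lemma divergence_at_identity:
  "x \<in> \<Omega> \<Longrightarrow> R x = mat 1 \<Longrightarrow> (norm (divM R x))\<^sup>2 = 2 * fnorm2 (mskew \<alpha>)"
  by (simp add: divergence_eq norm_axial_squared)

lemma hessian_symmetric: "x \<in> \<Omega> \<Longrightarrow> pd n (pd k R) x = pd k (pd n R) x"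
  by (rule pd_commute[OF open_domain _ differentiable_R differentiable_pd_R differentiable_pd_R])

lemma hessian_rows_symmetric:
  assumes "x \<in> \<Omega>"
  shows "pd n (pd k R) x $ i $ l = pd n (pd l R) x $ i $ k"
proof (rule eps_contraction_zero_imp_symmetric)
  fix b
  have "pd n (\<lambda>y. curlM R y $ i $ b) x = 0"
    using constant_curl by (intro pd_const_on_open[OF open_domain assms, of _ "\<alpha> $ i $ b"]) simp
  moreover have "pd n (\<lambda>y. curlM R y $ i $ b) x
      = (\<Sum>k\<in>UNIV. \<Sum>l\<in>UNIV. eps b k l * pd n (pd k R) x $ i $ l)"
    using differentiable_pd_R[OF assms]
    by (simp add: curlM_def pd_sum pd_mat_nth pd_bounded_linear[OF bounded_linear_mult_right])
  ultimately show "(\<Sum>k\<in>UNIV. \<Sum>l\<in>UNIV. eps b k l * pd n (pd k R) x $ i $ l) = 0"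
    by simp
qed

lemma laplacian_eq:
  assumes "x \<in> \<Omega>"
  shows "(\<Sum>m\<in>UNIV. pd m (pd m R) x $ i $ l) = axial (\<alpha> ** transpose (pd l R x)) $ i"
proof -
  have "(\<Sum>m\<in>UNIV. pd m (pd m R) x $ i $ l) = (\<Sum>m\<in>UNIV. pd m (pd l R) x $ i $ m)"
    by (intro sum.cong refl hessian_rows_symmetric[OF assms])
  also have "\<dots> = (\<Sum>m\<in>UNIV. pd l (pd m R) x $ i $ m)"
    by (simp add: hessian_symmetric[OF assms, of m l for m])
  also have "\<dots> = pd l (\<lambda>y. divM R y $ i) x"
    using differentiable_pd_R[OF assms] by (simp add: divM_def pd_sum pd_mat_nth)
  also have "\<dots> = pd l (\<lambda>y. axial (\<alpha> ** transpose (R y)) $ i) x"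
    using divergence_eq differentiable_R[OF assms]
    by (intro pd_eq_on_open(1)[OF open_domain assms]
        pd_bounded_linear(2)[OF bounded_linear_axial_mult_transpose]) simp_all
  also have "\<dots> = axial (\<alpha> ** transpose (pd l R x)) $ i"
    using differentiable_R[OF assms]
    by (rule pd_bounded_linear(1)[OF bounded_linear_axial_mult_transpose])
  finally show ?thesis .
qed

lemma vector_laplacian_eq:
  assumes "x \<in> \<Omega>"
  shows "(\<Sum>m\<in>UNIV. pd m (pd m R) x $ i)
    = (\<Sum>j\<in>UNIV. \<Sum>k\<in>UNIV. eps i j k *\<^sub>R grad (\<lambda>y. \<alpha> $ j \<bullet> R y $ k) x)"
proof -
  have "pd l (\<lambda>y. \<alpha> $ j \<bullet> R y $ k) x = \<alpha> $ j \<bullet> pd l R x $ k" for j k l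
    using bounded_linear_compose[OF bounded_linear_inner_right bounded_linear_vec_nth]
      differentiable_R[OF assms] by (rule pd_bounded_linear(1))
  then show ?thesis
    by (simp add: vec_eq_iff grad_def sum_component laplacian_eq[OF assms] axial_mult_transpose)
qed

lemma fnorm2_pd_eq:
  assumes "x \<in> \<Omega>"
  shows "fnorm2 (pd m R x) = - trace (transpose (R x) ** pd m (pd m R) x)"
proof -
  have "pd m (\<lambda>y. transpose (R y) ** pd m R y + transpose (pd m R y) ** R y) x = 0"
    using orthogonal_derivative by (intro pd_const_on_open[OF open_domain assms]) simp
  then have "transpose (R x) ** pd m (pd m R) x + transpose (pd m (pd m R) x) ** R x
      + (transpose (pd m R x) ** pd m R x + transpose (pd m R x) ** pd m R x) = 0"
    using differentiable_R[OF assms] differentiable_pd_R[OF assms]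
    by (simp add: pd_add pd_matrix_mult pd_transpose algebra_simps)
  then have "trace (transpose (R x) ** pd m (pd m R) x) + trace (transpose (pd m (pd m R) x) ** R x)
      + 2 * fnorm2 (pd m R x) = 0"
    by (metis (no_types) trace_add fnorm2_def mult_2 trace_0 mat_0)
  then have "2 * trace (transpose (R x) ** pd m (pd m R) x) + 2 * fnorm2 (pd m R x) = 0"
    using trace_transpose[of "transpose (R x) ** pd m (pd m R) x"]
    by (simp add: matrix_transpose_mul)
  then show ?thesis by simp
qed

lemma norm_gradient_eq:
  assumes "x \<in> \<Omega>"
  shows "(\<Sum>k\<in>UNIV. \<Sum>l\<in>UNIV. \<Sum>m\<in>UNIV. (pd m R x $ k $ l)\<^sup>2)
    = - trace (transpose (R x) ** \<alpha> ** transpose (R x) ** \<alpha>)"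
proof -
  have "(\<Sum>k\<in>UNIV. \<Sum>l\<in>UNIV. \<Sum>m\<in>UNIV. (pd m R x $ k $ l)\<^sup>2)
      = (\<Sum>k\<in>UNIV. \<Sum>m\<in>UNIV. \<Sum>l\<in>UNIV. (pd m R x $ k $ l)\<^sup>2)"
    by (rule sum.cong[OF refl sum.swap])
  also have "\<dots> = (\<Sum>m\<in>UNIV. fnorm2 (pd m R x))"
    unfolding fnorm2_eq_sum_squares by (rule sum.swap)
  also have "\<dots> = - (\<Sum>m\<in>UNIV. trace (transpose (R x) ** pd m (pd m R) x))"
    by (simp add: fnorm2_pd_eq[OF assms] sum_negf)
  also have "(\<Sum>m\<in>UNIV. trace (transpose (R x) ** pd m (pd m R) x))
      = (\<Sum>i\<in>UNIV. \<Sum>l\<in>UNIV. R x $ i $ l * (\<Sum>m\<in>UNIV. pd m (pd m R) x $ i $ l))"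
    unfolding trace_def matrix_matrix_mult_def transpose_def
    by (simp only: vec_lambda_beta sum_3 ring_distribs)
  also have "\<dots> = (\<Sum>i\<in>UNIV. \<Sum>l\<in>UNIV. R x $ i $ l * axial (\<alpha> ** transpose (pd l R x)) $ i)"
    by (simp add: laplacian_eq[OF assms])
  also have "\<dots> = trace (transpose (R x) ** \<alpha> ** transpose (R x) ** \<alpha>)"
    using rotation[OF assms] orthogonal_derivative[OF assms] curl_eq[OF assms]
    by (rule trace_identity)
  finally show ?thesis .
qed

end

theorem proposition4p3:
  fixes \<Omega> :: "(real^3) set" and R :: "real^3 \<Rightarrow> real^3^3" and \<alpha> :: "real^3^3"
  assumes "open \<Omega>"
    and "C2_on \<Omega> R"
    and "\<forall>x\<in>\<Omega>. R x \<in> SO3"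
    and "\<forall>x\<in>\<Omega>. curlM R x = \<alpha>"
  shows
    "(\<forall>x\<in>\<Omega>. \<forall>i. divM R x $ i = (\<Sum>j\<in>UNIV. \<Sum>k\<in>UNIV. eps i j k * (\<alpha> $ j \<bullet> R x $ k)))
   \<and> (\<forall>x\<in>\<Omega>. \<forall>i. (\<Sum>m\<in>UNIV. pd m (pd m R) x $ i)
          = (\<Sum>j\<in>UNIV. \<Sum>k\<in>UNIV. eps i j k *\<^sub>R grad (\<lambda>y. \<alpha> $ j \<bullet> R y $ k) x))
   \<and> (\<forall>x\<in>\<Omega>. (\<Sum>k\<in>UNIV. \<Sum>l\<in>UNIV. \<Sum>m\<in>UNIV. (pd m R x $ k $ l)^2)
          = - trace (transpose (R x) ** \<alpha> ** transpose (R x) ** \<alpha>))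
   \<and> (\<forall>x\<in>\<Omega>. trace (transpose (R x) ** \<alpha> ** transpose (R x) ** \<alpha>)
          = fnorm2 (msym (transpose (R x) ** \<alpha>)) - fnorm2 (mskew (transpose (R x) ** \<alpha>)))
   \<and> (\<forall>x0\<in>\<Omega>. R x0 = mat 1 \<longrightarrow> (norm (divM R x0))^2 = 2 * fnorm2 (mskew \<alpha>))
   \<and> (\<forall>x\<in>\<Omega>. (\<Sum>i\<in>UNIV. fnorm2 (msym (gradRow R i x))) \<ge> (1/3) * (norm (divM R x))^2)
   \<and> (\<forall>x\<in>\<Omega>. (\<Sum>i\<in>UNIV. fnorm2 (mskew (gradRow R i x))) = (1/2) * fnorm2 \<alpha>)"
proof -
  interpret rotation_field_with_constant_curl \<Omega> R \<alpha>
    using assms by unfold_locales auto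
  show ?thesis
    using divergence_components vector_laplacian_eq norm_gradient_eq divergence_at_identity
      trace_square_eq_sym_skew[of "transpose (R x) ** \<alpha>" for x, unfolded matrix_mul_assoc]
      norm_divM_squared_le sum_fnorm2_mskew_gradRow assms(4)
    by simp
qed

end
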